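(* Let $I\neq\emptyset$ and let $(I_j)_{j\in J}$ be a partition of $I$. For every $j\in J$ let $K_j\subseteq T^{I_j}$ be a compact set which is a set of uniqueness for $A(\overline{D}^{I_j})$. Then the compact set $K=\prod_{j\in J}K_j\subseteq\prod_{j\in J}T^{I_j}\equiv T^I$ is a set of uniqueness for $A(\overline{D}^I)$.
   Context: $\overline{D}=\{z\in\mathbb{C}:|z|\le1\}$, $T=\{z\in\mathbb{C}:|z|=1\}$, with product topologies on all products. For a non-empty set $S$, $A(\overline{D}^S)$ is the set of all functions $f:\overline{D}^S\to\mathbb{C}$ that are continuous and such that for every $s_0\in S$ and every $z\in\overline{D}^S$ the function of one variable obtained by varying only the coordinate $s_0$ (keeping the others equal to those of $z$) belongs to the disc algebra $A(\overline{D})$ (continuous on $\overline{D}$, holomorphic on the open disc). A compact set $K\subseteq T^S$ is a set of uniqueness for $A(\overline{D}^S)$ if any $f,g\in A(\overline{D}^S)$ with $f|_K=g|_K$ satisfy $f\equiv g$ on $\overline{D}^S$. *)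

theory Defs
  imports "HOL-Analysis.Analysis"
begin

text \<open>Points of the polydisc \<open>D^S\<close> are modelled as extensional functions
  \<open>'i \<Rightarrow> complex\<close> in \<open>PiE S (\<lambda>_. cball 0 1)\<close>, carrying the product topology.\<close>

definition polydisc :: "'i set \<Rightarrow> ('i \<Rightarrow> complex) set" where
  "polydisc S = PiE S (\<lambda>_. cball 0 1)"

definition torus :: "'i set \<Rightarrow> ('i \<Rightarrow> complex) set" where
  "torus S = PiE S (\<lambda>_. sphere 0 1)"

definition disc_algebra :: "(complex \<Rightarrow> complex) \<Rightarrow> bool" where
  "disc_algebra h \<longleftrightarrow> continuous_on (cball 0 1) h \<and> h holomorphic_on ball 0 1"

definition poly_disc_algebra :: "'i set \<Rightarrow> (('i \<Rightarrow> complex) \<Rightarrow> complex) \<Rightarrow> bool" where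
  "poly_disc_algebra S f \<longleftrightarrow>
     continuous_map (subtopology (product_topology (\<lambda>_. euclidean) S) (polydisc S)) euclidean f \<and>
     (\<forall>s0\<in>S. \<forall>z\<in>polydisc S. disc_algebra (\<lambda>w. f (z(s0 := w))))"

definition uniqueness_set :: "'i set \<Rightarrow> ('i \<Rightarrow> complex) set \<Rightarrow> bool" where
  "uniqueness_set S K \<longleftrightarrow>
     compactin (product_topology (\<lambda>_. euclidean) S) K \<and> K \<subseteq> torus S \<and>
     (\<forall>f g. poly_disc_algebra S f \<longrightarrow> poly_disc_algebra S g \<longrightarrow>
        (\<forall>x\<in>K. f x = g x) \<longrightarrow> (\<forall>x\<in>polydisc S. f x = g x))"

end

theory Submission
  imports Defs
begin

text \<open>Slice argument: if \<open>f\<close> and \<open>g\<close> agree on \<open>K\<close>, then freezing all coordinates outside one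
  block \<open>I\<^sub>j\<close> gives functions in \<open>A(D^I\<^sub>j)\<close> that agree on \<open>K\<^sub>j\<close>, hence on the whole
  polydisc of that block. Repeating this, \<open>f = g\<close> at every point of the polydisc whose
  restriction to all but finitely many blocks lies in the corresponding \<open>K\<^sub>j\<close>. Such points
  are dense in the polydisc for the product topology, because a basic neighbourhood constrains
  only finitely many coordinates; continuity of \<open>f - g\<close> finishes the proof.\<close>

definition splice :: "'i set \<Rightarrow> ('i \<Rightarrow> 'a) \<Rightarrow> ('i \<Rightarrow> 'a) \<Rightarrow> 'i \<Rightarrow> 'a" where
  "splice B u x = (\<lambda>i. if i \<in> B then u i else x i)"

lemma splice_restrict_self [simp]: "splice B (restrict x B) x = x"
  by (auto simp: splice_def)

lemma restrict_splice_same: "u \<in> extensional B \<Longrightarrow> restrict (splice B u x) B = u"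
  by (auto simp: splice_def extensional_def)

lemma restrict_splice_disjoint: "B \<inter> B' = {} \<Longrightarrow> restrict (splice B u x) B' = restrict x B'"
  by (auto simp: splice_def restrict_def fun_eq_iff)

lemma torus_subset_polydisc: "torus S \<subseteq> polydisc S"
  unfolding torus_def polydisc_def by (auto simp: PiE_iff)

lemma polydisc_nonempty: "polydisc S \<noteq> {}"
  unfolding polydisc_def by (simp add: PiE_eq_empty_iff)

lemma restrict_in_polydisc: "x \<in> polydisc I \<Longrightarrow> B \<subseteq> I \<Longrightarrow> restrict x B \<in> polydisc B"
  unfolding polydisc_def by auto

lemma splice_in_polydisc:
  "u \<in> polydisc B \<Longrightarrow> x \<in> polydisc I \<Longrightarrow> B \<subseteq> I \<Longrightarrow> splice B u x \<in> polydisc I"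
  unfolding polydisc_def splice_def by (auto simp: PiE_iff extensional_def)

lemma poly_disc_algebra_const: "poly_disc_algebra S (\<lambda>_. c)"
  unfolding poly_disc_algebra_def disc_algebra_def by auto

lemma uniqueness_set_nonempty: "uniqueness_set S K \<Longrightarrow> K \<noteq> {}"
  using poly_disc_algebra_const[of S 0] poly_disc_algebra_const[of S 1] polydisc_nonempty[of S]
  unfolding uniqueness_set_def by fastforce

lemma continuous_map_splice:
  assumes "B \<subseteq> I" "x \<in> topspace (product_topology X I)"
  shows "continuous_map (product_topology X B) (product_topology X I) (\<lambda>u. splice B u x)"
  using assms by (auto simp: continuous_map_componentwise splice_def extensional_def
      intro: continuous_map_product_projection)

lemma polydisc_subset_topspace: "polydisc I \<subseteq> topspace (product_topology (\<lambda>_. euclidean) I)"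
  unfolding polydisc_def by auto

lemma poly_disc_algebra_splice:
  assumes f: "poly_disc_algebra I f" and "B \<subseteq> I" and x: "x \<in> polydisc I"
  shows "poly_disc_algebra B (\<lambda>u. f (splice B u x))"
  unfolding poly_disc_algebra_def
proof (intro conjI ballI)
  let ?E = "\<lambda>S. product_topology (\<lambda>_. euclidean :: complex topology) S"
  have "x \<in> topspace (?E I)"
    using x polydisc_subset_topspace by blast
  then have "continuous_map (subtopology (?E B) (polydisc B)) (subtopology (?E I) (polydisc I))
      (\<lambda>u. splice B u x)"
    using assms splice_in_polydisc
    by (auto simp: continuous_map_in_subtopology
        intro!: continuous_map_from_subtopology continuous_map_splice)
  then show "continuous_map (subtopology (?E B) (polydisc B)) euclidean (\<lambda>u. f (splice B u x))"
    using f continuous_map_compose unfolding poly_disc_algebra_def o_def by fastforce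
next
  fix s z assume "s \<in> B" "z \<in> polydisc B"
  then have "(\<lambda>w. f (splice B (z(s := w)) x)) = (\<lambda>w. f ((splice B z x)(s := w)))"
    by (auto simp: splice_def fun_eq_iff intro!: arg_cong[where f = f])
  then show "disc_algebra (\<lambda>w. f (splice B (z(s := w)) x))"
    using f assms \<open>s \<in> B\<close> \<open>z \<in> polydisc B\<close> splice_in_polydisc
    unfolding poly_disc_algebra_def by (metis subsetD)
qed

lemma uniqueness_set_eq_on_slice:
  assumes "uniqueness_set B KB" "B \<subseteq> I" "poly_disc_algebra I f" "poly_disc_algebra I g"
    and "x \<in> polydisc I" and "\<And>u. u \<in> KB \<Longrightarrow> f (splice B u x) = g (splice B u x)"
  shows "f x = g x"
proof -
  have "\<forall>u\<in>polydisc B. f (splice B u x) = g (splice B u x)"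
    using assms poly_disc_algebra_splice unfolding uniqueness_set_def by blast
  then show ?thesis
    using restrict_in_polydisc[OF \<open>x \<in> polydisc I\<close> \<open>B \<subseteq> I\<close>] by fastforce
qed

lemma closedin_restrict_preimage:
  assumes "B \<subseteq> I" "closedin (product_topology X B) C"
  shows "closedin (product_topology X I) {x \<in> topspace (product_topology X I). restrict x B \<in> C}"
  using closedin_continuous_map_preimage[OF continuous_on_restrict[OF assms(1)] assms(2)] .

lemma openin_product_topology_finite_coords:
  assumes "openin (product_topology X I) T" "z \<in> T"
  obtains C where "finite C" "C \<subseteq> I"
    "\<And>x. x \<in> topspace (product_topology X I) \<Longrightarrow> (\<forall>i\<in>C. x i = z i) \<Longrightarrow> x \<in> T"
proof -
  obtain U where U: "finite {i \<in> I. U i \<noteq> topspace (X i)}" "\<forall>i\<in>I. openin (X i) (U i)"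
    "z \<in> Pi\<^sub>E I U" "Pi\<^sub>E I U \<subseteq> T"
    using assms unfolding openin_product_topology_alt by blast
  show thesis
  proof (rule that[of "{i \<in> I. U i \<noteq> topspace (X i)}"])
    fix x assume "x \<in> topspace (product_topology X I)" "\<forall>i\<in>{i \<in> I. U i \<noteq> topspace (X i)}. x i = z i"
    then have "x \<in> Pi\<^sub>E I U"
      using U(3) by (auto simp: PiE_iff)
    then show "x \<in> T" using U(4) by blast
  qed (use U(1) in blast)+
qed

lemma continuous_map_eq_by_finite_coords:
  fixes h :: "('i \<Rightarrow> 'a) \<Rightarrow> 'b::t1_space"
  assumes h: "continuous_map (subtopology (product_topology X I) S) euclidean h"
    and z: "z \<in> S" and S: "S \<subseteq> topspace (product_topology X I)"
    and approx: "\<And>C. finite C \<Longrightarrow> C \<subseteq> I \<Longrightarrow> \<exists>x\<in>S. (\<forall>i\<in>C. x i = z i) \<and> h x = c"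
  shows "h z = c"
proof (rule ccontr)
  assume "h z \<noteq> c"
  have "openin (subtopology (product_topology X I) S)
      {x \<in> topspace (subtopology (product_topology X I) S). h x \<in> - {c}}"
    by (rule openin_continuous_map_preimage[OF h]) (simp add: open_Compl)
  then obtain T where T: "openin (product_topology X I) T"
    and TS: "{x \<in> topspace (subtopology (product_topology X I) S). h x \<in> - {c}} = T \<inter> S"
    unfolding openin_subtopology by blast
  have inT: "x \<in> T \<longleftrightarrow> h x \<noteq> c" if "x \<in> S" for x
  proof -
    have "x \<in> T \<inter> S \<longleftrightarrow> h x \<noteq> c"
      unfolding TS[symmetric] using that S by auto
    then show ?thesis using that by blast
  qed
  obtain C where "finite C" "C \<subseteq> I"
    and C: "\<And>x. x \<in> topspace (product_topology X I) \<Longrightarrow> (\<forall>i\<in>C. x i = z i) \<Longrightarrow> x \<in> T"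
    using openin_product_topology_finite_coords[OF T] inT z \<open>h z \<noteq> c\<close> by metis
  then show False
    using approx[OF \<open>finite C\<close> \<open>C \<subseteq> I\<close>] inT S by blast
qed

locale uniqueness_blocks =
  fixes I :: "'i set" and J :: "'j set" and P :: "'j \<Rightarrow> 'i set"
    and Ks :: "'j \<Rightarrow> ('i \<Rightarrow> complex) set"
  assumes blocks_disjoint: "\<forall>j\<in>J. \<forall>k\<in>J. j \<noteq> k \<longrightarrow> P j \<inter> P k = {}"
    and blocks_cover: "(\<Union>j\<in>J. P j) = I"
    and blocks_uniqueness: "\<forall>j\<in>J. uniqueness_set (P j) (Ks j)"
begin

definition block_product :: "('i \<Rightarrow> complex) set" where
  "block_product = {x \<in> extensional I. \<forall>j\<in>J. restrict x (P j) \<in> Ks j}"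

definition block_of :: "'i \<Rightarrow> 'j" where
  "block_of i = (SOME j. j \<in> J \<and> i \<in> P j)"

lemma block_subset: "j \<in> J \<Longrightarrow> P j \<subseteq> I"
  using blocks_cover by blast

lemma block_of_in: "i \<in> I \<Longrightarrow> block_of i \<in> J \<and> i \<in> P (block_of i)"
  unfolding block_of_def using blocks_cover by (metis (mono_tags, lifting) UN_iff someI_ex)

lemma block_of_eq: "j \<in> J \<Longrightarrow> i \<in> P j \<Longrightarrow> block_of i = j"
  using block_of_in[of i] block_subset blocks_disjoint by blast

lemma block_torus: "j \<in> J \<Longrightarrow> Ks j \<subseteq> torus (P j)"
  using blocks_uniqueness unfolding uniqueness_set_def by blast

lemma block_product_subset_torus: "block_product \<subseteq> torus I"
proof
  fix x assume x: "x \<in> block_product"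
  have "x i \<in> sphere 0 1" if i: "i \<in> I" for i
  proof -
    obtain j where "j \<in> J" "i \<in> P j"
      using block_of_in[OF i] by blast
    then have "restrict x (P j) \<in> torus (P j)"
      using x block_torus unfolding block_product_def by blast
    then show ?thesis
      using \<open>i \<in> P j\<close> unfolding torus_def by auto
  qed
  then show "x \<in> torus I"
    using x unfolding block_product_def torus_def by (simp add: PiE_iff)
qed

lemma compactin_block_product:
  "compactin (product_topology (\<lambda>_. euclidean) I) block_product"
proof -
  let ?E = "product_topology (\<lambda>_. euclidean :: complex topology)"
  let ?C = "\<lambda>j. {x \<in> topspace (?E I). restrict x (P j) \<in> Ks j}"
  have "closedin (?E (P j)) (Ks j)" if "j \<in> J" for j
    using blocks_uniqueness that
    by (intro compactin_imp_closedin) (auto simp: uniqueness_set_def Hausdorff_space_product_topology)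
  then have "closedin (?E I) (?C j)" if "j \<in> J" for j
    using that by (intro closedin_restrict_preimage block_subset)
  moreover have "block_product = torus I \<inter> (\<Inter>j\<in>J. ?C j)"
  proof (intro equalityI subsetI)
    fix x assume "x \<in> block_product"
    then show "x \<in> torus I \<inter> (\<Inter>j\<in>J. ?C j)"
      using block_product_subset_torus torus_subset_polydisc polydisc_subset_topspace
      unfolding block_product_def by blast
  next
    fix x assume "x \<in> torus I \<inter> (\<Inter>j\<in>J. ?C j)"
    then show "x \<in> block_product"
      unfolding block_product_def torus_def by (simp add: PiE_iff)
  qed
  moreover have torus: "compactin (?E I) (torus I)"
    unfolding torus_def by (simp add: compactin_PiE)
  moreover have "closedin (?E I) (torus I)"
    using torus by (simp add: compactin_imp_closedin Hausdorff_space_product_topology)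
  ultimately show ?thesis
    using closed_compactin_Inter[OF torus, of "insert (torus I) (?C ` J)"] by auto
qed

lemma eq_off_finitely_many_blocks:
  assumes f: "poly_disc_algebra I f" and g: "poly_disc_algebra I g"
    and fg: "\<And>x. x \<in> block_product \<Longrightarrow> f x = g x" and "finite F"
  shows "x \<in> polydisc I \<Longrightarrow> \<forall>j\<in>J - F. restrict x (P j) \<in> Ks j \<Longrightarrow> f x = g x"
  using \<open>finite F\<close>
proof (induction F arbitrary: x rule: finite_induct)
  case empty
  then have "x \<in> extensional I"
    unfolding polydisc_def by (simp add: PiE_iff)
  then have "x \<in> block_product"
    using empty.prems(2) unfolding block_product_def by blast
  then show ?case by (rule fg)
next
  case (insert j F)
  show ?case
  proof (cases "j \<in> J")
    case False
    then have "J - insert j F = J - F" by blast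
    then show ?thesis using insert.IH insert.prems by simp
  next
    case True
    show ?thesis
    proof (rule uniqueness_set_eq_on_slice[OF _ block_subset[OF True] f g \<open>x \<in> polydisc I\<close>])
      show "uniqueness_set (P j) (Ks j)"
        using blocks_uniqueness True by blast
    next
      fix u assume u: "u \<in> Ks j"
      then have ut: "u \<in> torus (P j)"
        using block_torus True by blast
      have "restrict (splice (P j) u x) (P k) \<in> Ks k" if k: "k \<in> J - F" for k
      proof (cases "k = j")
        case True
        then show ?thesis
          using u ut by (simp add: restrict_splice_same torus_def PiE_iff)
      next
        case False
        then have "P j \<inter> P k = {}"
          using blocks_disjoint \<open>j \<in> J\<close> k by blast
        then have "restrict (splice (P j) u x) (P k) = restrict x (P k)"
          by (rule restrict_splice_disjoint)
        moreover have "restrict x (P k) \<in> Ks k"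
          using insert.prems(2) k False by blast
        ultimately show ?thesis by simp
      qed
      moreover have "splice (P j) u x \<in> polydisc I"
        using ut torus_subset_polydisc insert.prems(1) block_subset[OF True]
        by (blast intro: splice_in_polydisc)
      ultimately show "f (splice (P j) u x) = g (splice (P j) u x)"
        using insert.IH by blast
    qed
  qed
qed

lemma block_product_nonempty: "block_product \<noteq> {}"
proof -
  have "\<forall>j\<in>J. \<exists>k. k \<in> Ks j"
    using blocks_uniqueness uniqueness_set_nonempty by blast
  then obtain pick where pick: "\<And>j. j \<in> J \<Longrightarrow> pick j \<in> Ks j"
    by (metis bchoice)
  define w where "w = (\<lambda>i. if i \<in> I then pick (block_of i) i else undefined)"
  have "restrict w (P j) = pick j" if j: "j \<in> J" for j
  proof
    fix i
    have "pick j \<in> extensional (P j)"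
      using pick[OF j] block_torus[OF j] unfolding torus_def by (auto simp: PiE_iff)
    then show "restrict w (P j) i = pick j i"
      using block_of_eq[OF j] block_subset[OF j] unfolding w_def by (auto simp: extensional_def)
  qed
  then have "w \<in> block_product"
    using pick unfolding block_product_def by (simp add: w_def extensional_def)
  then show ?thesis by blast
qed

lemma block_product_approximation:
  assumes z: "z \<in> polydisc I" and "finite C" "C \<subseteq> I"
  obtains x F where "x \<in> polydisc I" "\<forall>i\<in>C. x i = z i" "finite F"
    "\<forall>j\<in>J - F. restrict x (P j) \<in> Ks j"
proof -
  obtain w where w: "w \<in> block_product"
    using block_product_nonempty by blast
  define F where "F = block_of ` C"
  define B where "B = I - block_of -` F"
  define x where "x = splice B (restrict w B) z"
    \<comment> \<open>\<open>z\<close> on the finitely many blocks meeting \<open>C\<close>, \<open>w\<close> on all other blocks\<close>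
  have "w \<in> polydisc I"
    using w block_product_subset_torus torus_subset_polydisc by blast
  then have "x \<in> polydisc I"
    unfolding x_def B_def using z by (blast intro: splice_in_polydisc restrict_in_polydisc)
  moreover have "\<forall>i\<in>C. x i = z i"
    unfolding x_def B_def F_def splice_def by auto
  moreover have "restrict x (P j) \<in> Ks j" if j: "j \<in> J - F" for j
  proof -
    have "P j \<subseteq> B"
      using j block_of_eq block_subset unfolding B_def by blast
    then have "restrict x (P j) = restrict w (P j)"
      unfolding x_def splice_def by (auto simp: restrict_def fun_eq_iff)
    then show ?thesis
      using w j unfolding block_product_def by simp
  qed
  ultimately show thesis
    using that \<open>finite C\<close> unfolding F_def by blast
qed

theorem uniqueness_set_block_product: "uniqueness_set I block_product"
  unfolding uniqueness_set_def
proof (intro conjI allI impI ballI compactin_block_product block_product_subset_torus)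
  fix f g z
  assume f: "poly_disc_algebra I f" and g: "poly_disc_algebra I g"
    and fg: "\<forall>x\<in>block_product. f x = g x" and z: "z \<in> polydisc I"
  have "continuous_map (subtopology (product_topology (\<lambda>_. euclidean) I) (polydisc I)) euclidean
      (\<lambda>x. f x - g x)"
    using f g unfolding poly_disc_algebra_def by (blast intro: continuous_map_diff)
  moreover have "\<exists>x\<in>polydisc I. (\<forall>i\<in>C. x i = z i) \<and> f x - g x = 0"
    if "finite C" "C \<subseteq> I" for C
    using block_product_approximation[OF z that] eq_off_finitely_many_blocks[OF f g] fg
    by (metis eq_iff_diff_eq_0)
  ultimately have "f z - g z = 0"
    by (rule continuous_map_eq_by_finite_coords[OF _ z polydisc_subset_topspace])
  then show "f z = g z" by simp
qed

end

theorem proposition3p8: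
  fixes I :: "'i set" and J :: "'j set" and P :: "'j \<Rightarrow> 'i set"
    and Ks :: "'j \<Rightarrow> ('i \<Rightarrow> complex) set"
  assumes "I \<noteq> {}"
    and "\<forall>j\<in>J. P j \<noteq> {}"
    and "\<forall>j\<in>J. \<forall>k\<in>J. j \<noteq> k \<longrightarrow> P j \<inter> P k = {}"
    and "(\<Union>j\<in>J. P j) = I"
    and "\<forall>j\<in>J. uniqueness_set (P j) (Ks j)"
  shows "uniqueness_set I {x \<in> extensional I. \<forall>j\<in>J. restrict x (P j) \<in> Ks j}"
proof -
  interpret uniqueness_blocks I J P Ks
    using assms(3-5) by unfold_locales
  show ?thesis
    using uniqueness_set_block_product unfolding block_product_def .
qed

end
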